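(* Let $n\ge2$, $D_0>0$ and $\alpha>(n-1)\beta\ge0$, and let $p^a\in\mathbb{R}^n_{\ge0}$. For each fixed payment vector $\bar p^d=(p^d_2,\dots,p^d_n)\in\mathbb{R}^{n-1}$, the collusion game described below has a unique pure-strategy Nash equilibrium. It has the following properties. - The colluding pair's price is $$p_1=p^s_1+p^c_1=-\frac{p^a_1}{2}+\frac{D_0}{2(\alpha-(n-1)\beta)}.$$ - For $i=2,\dots,n$, $p^s_i=g_i-p^d_i$ and $p^c_i=h_i+p^d_i$, where the constants $g_i,h_i$ depend only on $p^a,D_0,\alpha,\beta$. - The equilibrium demand vector, the revenues per unit demand, and hence the total revenues of the colluding pair and of the other CPs, do not depend on $\bar p^d$. Thus the equilibrium is unique up to a free choice of $\bar p^d$.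
   Context: One ISP and $n$ CPs, where CP 1 has an exclusive contract with the ISP. The ISP together with CP 1 forms a single "colluding pair" player $\overline{ISP}$, which chooses the vector $$\bar p^s=(p_1,p^s_2,\dots,p^s_n),\qquad p_1=p^s_1+p^c_1,$$ where $p_1$ is the price charged to internauts of CP 1. Each CP $i\ge2$ chooses $p^c_i\in\mathbb{R}$. The payments $p^d_i$ ($i\ge2$) from CP $i$ to the ISP are fixed beforehand by a regulator (ex ante regulation). $p^a_i\ge0$ are advertising revenues per unit demand. With $p_i=p^s_i+p^c_i$ and $D_i=D_0-\alpha p_i+\beta\sum_{j\ne i}p_j$, the payoffs are $$U_{\overline{ISP}}=D_1(p_1+p^a_1)+\sum_{i\ge2}D_i(p^s_i+p^d_i),\qquad U_{CP,i}=D_i(p^c_i+p^a_i-p^d_i)\ \ (i\ge2),$$ and all strategies range over the reals. *)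

theory Defs
  imports Main "HOL.Real"
begin

text \<open>CPs are indexed by 1..n. The colluding pair's strategy is a function
  s :: nat => real with s 1 = p_1 (price to internauts of CP 1) and
  s i = p^s_i for i = 2..n; other values are irrelevant.
  The CPs' strategies are pc :: nat => real, pc i = p^c_i for i = 2..n.
  pd i = p^d_i (i = 2..n) are the regulated payments, pa i = p^a_i.\<close>

definition price :: "(nat \<Rightarrow> real) \<Rightarrow> (nat \<Rightarrow> real) \<Rightarrow> nat \<Rightarrow> real" where
  "price s pc i = (if i = 1 then s 1 else s i + pc i)"

definition demand :: "nat \<Rightarrow> real \<Rightarrow> real \<Rightarrow> real \<Rightarrow> (nat \<Rightarrow> real) \<Rightarrow> nat \<Rightarrow> real" where
  "demand n D0 \<alpha> \<beta> p i = D0 - \<alpha> * p i + \<beta> * (\<Sum>j\<in>{1..n} - {i}. p j)"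

definition U_ISP :: "nat \<Rightarrow> real \<Rightarrow> real \<Rightarrow> real \<Rightarrow> (nat \<Rightarrow> real) \<Rightarrow> (nat \<Rightarrow> real)
    \<Rightarrow> (nat \<Rightarrow> real) \<Rightarrow> (nat \<Rightarrow> real) \<Rightarrow> real" where
  "U_ISP n D0 \<alpha> \<beta> pa pd s pc =
     demand n D0 \<alpha> \<beta> (price s pc) 1 * (s 1 + pa 1)
     + (\<Sum>i\<in>{2..n}. demand n D0 \<alpha> \<beta> (price s pc) i * (s i + pd i))"

definition U_CP :: "nat \<Rightarrow> real \<Rightarrow> real \<Rightarrow> real \<Rightarrow> (nat \<Rightarrow> real) \<Rightarrow> (nat \<Rightarrow> real)
    \<Rightarrow> (nat \<Rightarrow> real) \<Rightarrow> (nat \<Rightarrow> real) \<Rightarrow> nat \<Rightarrow> real" where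
  "U_CP n D0 \<alpha> \<beta> pa pd s pc i =
     demand n D0 \<alpha> \<beta> (price s pc) i * (pc i + pa i - pd i)"

definition is_NE :: "nat \<Rightarrow> real \<Rightarrow> real \<Rightarrow> real \<Rightarrow> (nat \<Rightarrow> real) \<Rightarrow> (nat \<Rightarrow> real)
    \<Rightarrow> (nat \<Rightarrow> real) \<Rightarrow> (nat \<Rightarrow> real) \<Rightarrow> bool" where
  "is_NE n D0 \<alpha> \<beta> pa pd s pc \<longleftrightarrow>
     (\<forall>s'. U_ISP n D0 \<alpha> \<beta> pa pd s' pc \<le> U_ISP n D0 \<alpha> \<beta> pa pd s pc) \<and>
     (\<forall>i\<in>{2..n}. \<forall>x. U_CP n D0 \<alpha> \<beta> pa pd s (pc(i := x)) i \<le> U_CP n D0 \<alpha> \<beta> pa pd s pc i)"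

end

theory Submission
  imports Defs "HOL-Analysis.Convex"
begin

text \<open>Let Q k be the colluding pair's revenue per unit demand of CP k (p_1 + p^a_1 for k = 1,
  p^s_k + p^d_k otherwise) and r k the CP's own (r 1 = 0). Every price equals Q k + r k - p^a_k, so
  the game sees the strategies only through Q and r, and p^d merely reparametrises them.
  The colluding pair's payoff is a quadratic in Q whose quadratic part
  -(alpha + beta) |d|^2 + beta (sum d)^2 is negative definite since alpha > (n - 1) beta, and each
  CP's payoff is a concave quadratic in r k; so the equilibria are exactly the solutions of the
  first-order conditions. Eliminating Q, these become two linear systems of the form
  a x_k - beta (sum x) = y_k with invertible matrix, which determine Q and r uniquely.\<close>

lemma shifted_linear_system_iff:
  fixes a \<beta> :: real and x y :: "'a \<Rightarrow> real"
  assumes "finite A" "a \<noteq> 0" "a - real (card A) * \<beta> \<noteq> 0"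
  shows "(\<forall>k\<in>A. a * x k - \<beta> * sum x A = y k) \<longleftrightarrow>
         (\<forall>k\<in>A. x k = (y k + \<beta> * sum y A / (a - real (card A) * \<beta>)) / a)"
proof
  assume H: "\<forall>k\<in>A. a * x k - \<beta> * sum x A = y k"
  have "sum y A = (\<Sum>k\<in>A. a * x k - \<beta> * sum x A)"
    using H by simp
  also have "\<dots> = (a - real (card A) * \<beta>) * sum x A"
    by (simp add: sum_subtractf sum_distrib_left[symmetric] left_diff_distrib)
  finally have "sum x A = sum y A / (a - real (card A) * \<beta>)"
    using assms(3) by (simp add: field_simps)
  then show "\<forall>k\<in>A. x k = (y k + \<beta> * sum y A / (a - real (card A) * \<beta>)) / a"
    using H assms(2) by (simp add: field_simps)
next
  assume H: "\<forall>k\<in>A. x k = (y k + \<beta> * sum y A / (a - real (card A) * \<beta>)) / a"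
  have "sum x A = (\<Sum>k\<in>A. (y k + \<beta> * sum y A / (a - real (card A) * \<beta>)) / a)"
    using H by simp
  also have "\<dots> = (sum y A + real (card A) * (\<beta> * sum y A / (a - real (card A) * \<beta>))) / a"
    by (simp add: sum.distrib sum_divide_distrib[symmetric])
  also have "\<dots> = sum y A / (a - real (card A) * \<beta>)"
    using assms(2,3) by (simp add: field_simps)
  finally have sum_x: "sum x A = sum y A / (a - real (card A) * \<beta>)" .
  show "\<forall>k\<in>A. a * x k - \<beta> * sum x A = y k"
    unfolding sum_x using H assms(2) by (simp add: field_simps)
qed

lemma quadratic_nonpos_iff:
  fixes a G :: real
  assumes "a > 0"
  shows "(\<forall>t. t * G - a * t\<^sup>2 \<le> 0) \<longleftrightarrow> G = 0"
proof
  assume "\<forall>t. t * G - a * t\<^sup>2 \<le> 0"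
  then have "(G / (2 * a)) * G - a * (G / (2 * a))\<^sup>2 \<le> 0" by blast
  then have "G\<^sup>2 / (4 * a) \<le> 0"
    using assms by (simp add: field_simps power2_eq_square)
  then show "G = 0"
    using assms by (simp add: divide_le_0_iff)
qed (use assms in simp)

definition isp_unit_revenue :: "(nat \<Rightarrow> real) \<Rightarrow> (nat \<Rightarrow> real) \<Rightarrow> (nat \<Rightarrow> real) \<Rightarrow> nat \<Rightarrow> real" where
  "isp_unit_revenue pa pd s k = (if k = 1 then s 1 + pa 1 else s k + pd k)"

text \<open>CP 1's revenue accrues to the colluding pair, so its own unit revenue is 0.\<close>
definition cp_unit_revenue :: "(nat \<Rightarrow> real) \<Rightarrow> (nat \<Rightarrow> real) \<Rightarrow> (nat \<Rightarrow> real) \<Rightarrow> nat \<Rightarrow> real" where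
  "cp_unit_revenue pa pd pc k = (if k = 1 then 0 else pc k + pa k - pd k)"

lemma price_eq_unit_revenues:
  "price s pc k = isp_unit_revenue pa pd s k + cp_unit_revenue pa pd pc k - pa k"
  by (simp add: price_def isp_unit_revenue_def cp_unit_revenue_def)

lemma demand_eq_sum:
  assumes "k \<in> {1..n}"
  shows "demand n D0 \<alpha> \<beta> p k = D0 - (\<alpha> + \<beta>) * p k + \<beta> * sum p {1..n}"
proof -
  have others: "(\<Sum>j\<in>{1..n} - {k}. p j) = sum p {1..n} - p k"
    using assms by (simp add: sum_diff1)
  show ?thesis
    unfolding demand_def others by (simp add: algebra_simps)
qed

lemma demand_cong:
  assumes "\<forall>j\<in>{1..n}. p j = q j" and "k \<in> {1..n}"
  shows "demand n D0 \<alpha> \<beta> p k = demand n D0 \<alpha> \<beta> q k"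
proof -
  have "sum p {1..n} = sum q {1..n}"
    using assms(1) by simp
  then show ?thesis
    using assms by (simp add: demand_eq_sum)
qed

lemma U_ISP_eq_sum:
  assumes "n \<ge> 1"
  shows "U_ISP n D0 \<alpha> \<beta> pa pd s pc =
    (\<Sum>k\<in>{1..n}. demand n D0 \<alpha> \<beta> (price s pc) k * isp_unit_revenue pa pd s k)"
proof -
  have "{1..n} = insert 1 {2..n}"
    using assms by auto
  moreover have "(\<Sum>k\<in>{2..n}. demand n D0 \<alpha> \<beta> (price s pc) k * (s k + pd k)) =
      (\<Sum>k\<in>{2..n}. demand n D0 \<alpha> \<beta> (price s pc) k * isp_unit_revenue pa pd s k)"
    by (rule sum.cong) (auto simp: isp_unit_revenue_def)
  ultimately show ?thesis
    unfolding U_ISP_def by (simp add: isp_unit_revenue_def)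
qed

lemma U_CP_eq:
  "k \<noteq> 1 \<Longrightarrow> U_CP n D0 \<alpha> \<beta> pa pd s pc k = demand n D0 \<alpha> \<beta> (price s pc) k * cp_unit_revenue pa pd pc k"
  by (simp add: U_CP_def cp_unit_revenue_def)

lemma U_ISP_shift:
  fixes pa pd s d :: "nat \<Rightarrow> real"
  assumes "n \<ge> 1"
  defines "Q \<equiv> isp_unit_revenue pa pd s"
  shows "U_ISP n D0 \<alpha> \<beta> pa pd (\<lambda>j. s j + d j) pc - U_ISP n D0 \<alpha> \<beta> pa pd s pc =
    (\<Sum>k\<in>{1..n}. (demand n D0 \<alpha> \<beta> (price s pc) k - (\<alpha> + \<beta>) * Q k + \<beta> * sum Q {1..n}) * d k)
    - (\<alpha> + \<beta>) * (\<Sum>k\<in>{1..n}. (d k)\<^sup>2) + \<beta> * (sum d {1..n})\<^sup>2"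
proof -
  let ?P = "price s pc"
  have shifted: "price (\<lambda>j. s j + d j) pc = (\<lambda>k. ?P k + d k)"
    "isp_unit_revenue pa pd (\<lambda>j. s j + d j) = (\<lambda>k. Q k + d k)"
    by (auto simp: price_def isp_unit_revenue_def Q_def)
  have "U_ISP n D0 \<alpha> \<beta> pa pd (\<lambda>j. s j + d j) pc - U_ISP n D0 \<alpha> \<beta> pa pd s pc
     = (\<Sum>k\<in>{1..n}. (D0 - (\<alpha> + \<beta>) * (?P k + d k) + \<beta> * (sum ?P {1..n} + sum d {1..n})) * (Q k + d k)
          - (D0 - (\<alpha> + \<beta>) * ?P k + \<beta> * sum ?P {1..n}) * Q k)"
    unfolding U_ISP_eq_sum[OF assms(1)] shifted Q_def sum_subtractf[symmetric]
    by (rule sum.cong) (simp_all add: demand_eq_sum sum.distrib)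
  also have "\<dots> = (\<Sum>k\<in>{1..n}. (D0 - (\<alpha> + \<beta>) * ?P k + \<beta> * sum ?P {1..n} - (\<alpha> + \<beta>) * Q k + \<beta> * sum Q {1..n}) * d k
       - (\<alpha> + \<beta>) * (d k)\<^sup>2 + \<beta> * sum d {1..n} * d k + \<beta> * (sum d {1..n} * Q k - sum Q {1..n} * d k))"
    by (rule sum.cong) (simp_all add: algebra_simps power2_eq_square)
  also have "\<dots> = (\<Sum>k\<in>{1..n}. (D0 - (\<alpha> + \<beta>) * ?P k + \<beta> * sum ?P {1..n} - (\<alpha> + \<beta>) * Q k + \<beta> * sum Q {1..n}) * d k)
       - (\<alpha> + \<beta>) * (\<Sum>k\<in>{1..n}. (d k)\<^sup>2) + \<beta> * (sum d {1..n})\<^sup>2"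
  proof -
    have "(\<Sum>k\<in>{1..n}. \<beta> * sum d {1..n} * d k) = \<beta> * (sum d {1..n})\<^sup>2"
      by (simp add: sum_distrib_left[symmetric] power2_eq_square)
    moreover have "(\<Sum>k\<in>{1..n}. sum d {1..n} * Q k - sum Q {1..n} * d k) = 0"
      by (simp add: sum_distrib_left[symmetric] sum_subtractf)
    then have "(\<Sum>k\<in>{1..n}. \<beta> * (sum d {1..n} * Q k - sum Q {1..n} * d k)) = 0"
      by (simp add: sum_distrib_left[symmetric])
    ultimately show ?thesis
      by (simp only: sum.distrib sum_subtractf sum_distrib_left[symmetric])
  qed
  also have "\<dots> = (\<Sum>k\<in>{1..n}. (demand n D0 \<alpha> \<beta> ?P k - (\<alpha> + \<beta>) * Q k + \<beta> * sum Q {1..n}) * d k)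
      - (\<alpha> + \<beta>) * (\<Sum>k\<in>{1..n}. (d k)\<^sup>2) + \<beta> * (sum d {1..n})\<^sup>2"
    by (simp add: demand_eq_sum)
  finally show ?thesis .
qed

lemma U_CP_update:
  assumes "i \<in> {2..n}"
  shows "U_CP n D0 \<alpha> \<beta> pa pd s (pc(i := x)) i - U_CP n D0 \<alpha> \<beta> pa pd s pc i
    = (x - pc i) * (demand n D0 \<alpha> \<beta> (price s pc) i - \<alpha> * (pc i + pa i - pd i)) - \<alpha> * (x - pc i)\<^sup>2"
proof -
  have i: "i \<in> {1..n}" "i \<noteq> 1"
    using assms by auto
  have "price s (pc(i := x)) = (\<lambda>k. price s pc k + (if k = i then x - pc i else 0))"
    using i by (auto simp: price_def)
  then have price_i: "price s (pc(i := x)) i = price s pc i + (x - pc i)"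
    and price_sum: "sum (price s (pc(i := x))) {1..n} = sum (price s pc) {1..n} + (x - pc i)"
    using i by (simp_all add: sum.distrib)
  show ?thesis
    unfolding U_CP_def demand_eq_sum[OF i(1)] price_i price_sum
    using i by (simp add: algebra_simps power2_eq_square)
qed

lemma U_ISP_shift_coordinate:
  fixes pa pd s :: "nat \<Rightarrow> real"
  assumes "k \<in> {1..n}"
  defines "Q \<equiv> isp_unit_revenue pa pd s"
  shows "U_ISP n D0 \<alpha> \<beta> pa pd (\<lambda>j. s j + (if j = k then t else 0)) pc - U_ISP n D0 \<alpha> \<beta> pa pd s pc
    = t * (demand n D0 \<alpha> \<beta> (price s pc) k - (\<alpha> + \<beta>) * Q k + \<beta> * sum Q {1..n}) - \<alpha> * t\<^sup>2"
proof -
  let ?G = "\<lambda>k. demand n D0 \<alpha> \<beta> (price s pc) k - (\<alpha> + \<beta>) * Q k + \<beta> * sum Q {1..n}"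
    and ?d = "\<lambda>j. if j = k then t else 0"
  have G_d: "(\<lambda>j. ?G j * ?d j) = (\<lambda>j. if j = k then ?G k * t else 0)"
    and d_sq: "(\<lambda>j. (?d j)\<^sup>2) = (\<lambda>j. if j = k then t\<^sup>2 else 0)"
    by auto
  have "(\<Sum>j\<in>{1..n}. ?G j * ?d j) = ?G k * t"
    unfolding G_d using assms(1) by simp
  moreover have "(\<Sum>j\<in>{1..n}. (?d j)\<^sup>2) = t\<^sup>2"
    unfolding d_sq using assms(1) by simp
  moreover have "sum ?d {1..n} = t"
    using assms(1) by simp
  moreover have "n \<ge> 1"
    using assms(1) by simp
  then have "U_ISP n D0 \<alpha> \<beta> pa pd (\<lambda>j. s j + ?d j) pc - U_ISP n D0 \<alpha> \<beta> pa pd s pc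
      = (\<Sum>j\<in>{1..n}. ?G j * ?d j) - (\<alpha> + \<beta>) * (\<Sum>j\<in>{1..n}. (?d j)\<^sup>2) + \<beta> * (sum ?d {1..n})\<^sup>2"
    unfolding Q_def by (rule U_ISP_shift)
  ultimately show ?thesis
    by (simp add: algebra_simps)
qed

lemma scaled_sum_squared_le_sum_of_squares:
  fixes d :: "nat \<Rightarrow> real"
  assumes "\<beta> \<ge> 0" and "\<alpha> > (real n - 1) * \<beta>"
  shows "\<beta> * (sum d {1..n})\<^sup>2 \<le> (\<alpha> + \<beta>) * (\<Sum>k\<in>{1..n}. (d k)\<^sup>2)"
proof -
  let ?sq = "\<Sum>k\<in>{1..n}. (d k)\<^sup>2"
  have "(sum d {1..n})\<^sup>2 \<le> ?sq * real n"
    using sum_squared_le_sum_of_squares[of d "{1..n}"] by simp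
  then have "\<beta> * (sum d {1..n})\<^sup>2 \<le> \<beta> * real n * ?sq"
    using assms(1) mult_left_mono by (fastforce simp: mult.commute mult.left_commute)
  also have "\<dots> \<le> (\<alpha> + \<beta>) * ?sq"
    using assms(2) by (intro mult_right_mono) (simp_all add: algebra_simps sum_nonneg)
  finally show ?thesis .
qed

lemma isp_best_response_iff:
  fixes pa pd s :: "nat \<Rightarrow> real"
  assumes "n \<ge> 1" and "\<beta> \<ge> 0" and "\<alpha> > (real n - 1) * \<beta>"
  defines "Q \<equiv> isp_unit_revenue pa pd s"
  shows "(\<forall>s'. U_ISP n D0 \<alpha> \<beta> pa pd s' pc \<le> U_ISP n D0 \<alpha> \<beta> pa pd s pc) \<longleftrightarrow>
    (\<forall>k\<in>{1..n}. demand n D0 \<alpha> \<beta> (price s pc) k = (\<alpha> + \<beta>) * Q k - \<beta> * sum Q {1..n})"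
proof
  let ?G = "\<lambda>k. demand n D0 \<alpha> \<beta> (price s pc) k - (\<alpha> + \<beta>) * Q k + \<beta> * sum Q {1..n}"
  assume max: "\<forall>s'. U_ISP n D0 \<alpha> \<beta> pa pd s' pc \<le> U_ISP n D0 \<alpha> \<beta> pa pd s pc"
  have "(real n - 1) * \<beta> \<ge> 0"
    using assms(1,2) by simp
  then have "\<alpha> > 0"
    using assms(3) by linarith
  have nonpos: "t * ?G k - \<alpha> * t\<^sup>2 \<le> 0" if "k \<in> {1..n}" for k t
  proof -
    have "U_ISP n D0 \<alpha> \<beta> pa pd (\<lambda>j. s j + (if j = k then t else 0)) pc \<le> U_ISP n D0 \<alpha> \<beta> pa pd s pc"
      using max by blast
    then show ?thesis
      using U_ISP_shift_coordinate[OF that, of D0 \<alpha> \<beta> pa pd s t pc]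
      unfolding Q_def by linarith
  qed
  show "\<forall>k\<in>{1..n}. demand n D0 \<alpha> \<beta> (price s pc) k = (\<alpha> + \<beta>) * Q k - \<beta> * sum Q {1..n}"
  proof
    fix k assume "k \<in> {1..n}"
    then have "?G k = 0"
      using nonpos quadratic_nonpos_iff[OF \<open>\<alpha> > 0\<close>, of "?G k"] by blast
    then show "demand n D0 \<alpha> \<beta> (price s pc) k = (\<alpha> + \<beta>) * Q k - \<beta> * sum Q {1..n}"
      by simp
  qed
next
  assume "\<forall>k\<in>{1..n}. demand n D0 \<alpha> \<beta> (price s pc) k = (\<alpha> + \<beta>) * Q k - \<beta> * sum Q {1..n}"
  then have gain: "U_ISP n D0 \<alpha> \<beta> pa pd (\<lambda>j. s j + d j) pc - U_ISP n D0 \<alpha> \<beta> pa pd s pc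
      = \<beta> * (sum d {1..n})\<^sup>2 - (\<alpha> + \<beta>) * (\<Sum>k\<in>{1..n}. (d k)\<^sup>2)" for d
    using U_ISP_shift[OF assms(1)] unfolding Q_def by simp
  have shifted_le: "U_ISP n D0 \<alpha> \<beta> pa pd (\<lambda>j. s j + d j) pc \<le> U_ISP n D0 \<alpha> \<beta> pa pd s pc" for d
    using gain[of d] scaled_sum_squared_le_sum_of_squares[OF assms(2,3), of d] by linarith
  show "\<forall>s'. U_ISP n D0 \<alpha> \<beta> pa pd s' pc \<le> U_ISP n D0 \<alpha> \<beta> pa pd s pc"
  proof
    fix s'
    show "U_ISP n D0 \<alpha> \<beta> pa pd s' pc \<le> U_ISP n D0 \<alpha> \<beta> pa pd s pc"
      using shifted_le[of "\<lambda>j. s' j - s j"] by simp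
  qed
qed

lemma cp_best_response_iff:
  assumes "i \<in> {2..n}" and "\<alpha> > 0"
  shows "(\<forall>x. U_CP n D0 \<alpha> \<beta> pa pd s (pc(i := x)) i \<le> U_CP n D0 \<alpha> \<beta> pa pd s pc i) \<longleftrightarrow>
    demand n D0 \<alpha> \<beta> (price s pc) i = \<alpha> * cp_unit_revenue pa pd pc i"
proof -
  let ?G = "demand n D0 \<alpha> \<beta> (price s pc) i - \<alpha> * (pc i + pa i - pd i)"
  have "(\<forall>x. U_CP n D0 \<alpha> \<beta> pa pd s (pc(i := x)) i \<le> U_CP n D0 \<alpha> \<beta> pa pd s pc i) \<longleftrightarrow>
      (\<forall>t. t * ?G - \<alpha> * t\<^sup>2 \<le> 0)"
    using U_CP_update[OF assms(1)] by (metis add_diff_cancel_left' diff_add_cancel diff_le_0_iff_le)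
  also have "\<dots> \<longleftrightarrow> ?G = 0"
    using assms(2) by (rule quadratic_nonpos_iff)
  finally show ?thesis
    using assms(1) by (simp add: cp_unit_revenue_def)
qed

text \<open>At the equilibrium, Q k + price k = ne_level for every CP k.\<close>
definition ne_level :: "nat \<Rightarrow> real \<Rightarrow> real \<Rightarrow> real \<Rightarrow> real" where
  "ne_level n D0 \<alpha> \<beta> = D0 / (\<alpha> - (real n - 1) * \<beta>)"

definition cp_system_rhs :: "nat \<Rightarrow> real \<Rightarrow> real \<Rightarrow> real \<Rightarrow> (nat \<Rightarrow> real) \<Rightarrow> nat \<Rightarrow> real" where
  "cp_system_rhs n D0 \<alpha> \<beta> pa k = D0 + (\<alpha> + \<beta>) * pa k - \<beta> * sum pa {1..n}"

definition ne_cp_revenue :: "nat \<Rightarrow> real \<Rightarrow> real \<Rightarrow> real \<Rightarrow> (nat \<Rightarrow> real) \<Rightarrow> nat \<Rightarrow> real" where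
  "ne_cp_revenue n D0 \<alpha> \<beta> pa k =
    (if k = 1 then 0
     else (cp_system_rhs n D0 \<alpha> \<beta> pa k
           + \<beta> * sum (cp_system_rhs n D0 \<alpha> \<beta> pa) {2..n} / (3 * \<alpha> + \<beta> - (real n - 1) * \<beta>))
          / (3 * \<alpha> + \<beta>))"

definition ne_isp_revenue :: "nat \<Rightarrow> real \<Rightarrow> real \<Rightarrow> real \<Rightarrow> (nat \<Rightarrow> real) \<Rightarrow> nat \<Rightarrow> real" where
  "ne_isp_revenue n D0 \<alpha> \<beta> pa k = (ne_level n D0 \<alpha> \<beta> - ne_cp_revenue n D0 \<alpha> \<beta> pa k + pa k) / 2"

lemma isp_foc_iff:
  fixes Q r pa :: "nat \<Rightarrow> real"
  assumes "n \<ge> 1" and "\<beta> \<ge> 0" and "\<alpha> > (real n - 1) * \<beta>"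
  shows "(\<forall>k\<in>{1..n}. demand n D0 \<alpha> \<beta> (\<lambda>k. Q k + r k - pa k) k = (\<alpha> + \<beta>) * Q k - \<beta> * sum Q {1..n})
     \<longleftrightarrow> (\<forall>k\<in>{1..n}. Q k = (ne_level n D0 \<alpha> \<beta> - r k + pa k) / 2)"
proof -
  let ?x = "\<lambda>k. 2 * Q k + r k - pa k"
  have "(real n - 1) * \<beta> \<ge> 0"
    using assms(1,2) by simp
  then have pos: "\<alpha> + \<beta> > 0" "\<alpha> + \<beta> - real n * \<beta> > 0"
    using assms(2,3) by (linarith, simp add: algebra_simps)
  have c_eq: "\<alpha> + \<beta> - real n * \<beta> = \<alpha> - (real n - 1) * \<beta>"
    by (simp add: algebra_simps)
  have level: "(D0 + \<beta> * (real n * D0) / (\<alpha> + \<beta> - real n * \<beta>)) / (\<alpha> + \<beta>) = ne_level n D0 \<alpha> \<beta>"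
  proof -
    have "D0 + \<beta> * (real n * D0) / (\<alpha> + \<beta> - real n * \<beta>) = (\<alpha> + \<beta>) * D0 / (\<alpha> + \<beta> - real n * \<beta>)"
      using pos(2) by (simp add: field_simps)
    then show ?thesis
      unfolding ne_level_def c_eq[symmetric] using pos(1) by simp
  qed
  have "(\<forall>k\<in>{1..n}. demand n D0 \<alpha> \<beta> (\<lambda>k. Q k + r k - pa k) k = (\<alpha> + \<beta>) * Q k - \<beta> * sum Q {1..n})
     \<longleftrightarrow> (\<forall>k\<in>{1..n}. (\<alpha> + \<beta>) * ?x k - \<beta> * sum ?x {1..n} = D0)"
  proof -
    have "sum ?x {1..n} = 2 * sum Q {1..n} + sum r {1..n} - sum pa {1..n}"
      by (simp add: sum.distrib sum_subtractf sum_distrib_left)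
    then show ?thesis
      by (intro ball_cong refl) (auto simp: demand_eq_sum sum.distrib sum_subtractf algebra_simps)
  qed
  also have "\<dots> \<longleftrightarrow> (\<forall>k\<in>{1..n}. ?x k = (D0 + \<beta> * sum (\<lambda>_. D0) {1..n} / (\<alpha> + \<beta> - real (card {1..n}) * \<beta>)) / (\<alpha> + \<beta>))"
    using pos by (intro shifted_linear_system_iff) simp_all
  also have "\<dots> \<longleftrightarrow> (\<forall>k\<in>{1..n}. ?x k = ne_level n D0 \<alpha> \<beta>)"
    using level by simp
  finally show ?thesis
    by (auto simp: field_simps)
qed

lemma cp_foc_iff:
  fixes Q r pa :: "nat \<Rightarrow> real"
  assumes "n \<ge> 2" and "\<beta> \<ge> 0" and "\<alpha> > (real n - 1) * \<beta>" and "r 1 = 0"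
    and Q: "\<forall>k\<in>{1..n}. Q k = (ne_level n D0 \<alpha> \<beta> - r k + pa k) / 2"
  shows "(\<forall>k\<in>{2..n}. (\<alpha> + \<beta>) * Q k - \<beta> * sum Q {1..n} = \<alpha> * r k)
     \<longleftrightarrow> (\<forall>k\<in>{2..n}. r k = ne_cp_revenue n D0 \<alpha> \<beta> pa k)"
proof -
  define K where "K = ne_level n D0 \<alpha> \<beta>"
  let ?b = "cp_system_rhs n D0 \<alpha> \<beta> pa"
  have "(real n - 1) * \<beta> \<ge> 0"
    using assms(1,2) by simp
  then have pos: "3 * \<alpha> + \<beta> > 0" "3 * \<alpha> + \<beta> - (real n - 1) * \<beta> > 0"
    using assms(2,3) by linarith+
  have D0: "D0 = (\<alpha> - (real n - 1) * \<beta>) * K"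
    using assms(3) by (simp add: K_def ne_level_def)
  have "{1..n} = insert 1 {2..n}"
    using assms(1) by auto
  then have sum_r: "sum r {1..n} = sum r {2..n}"
    using assms(4) by simp
  have "sum Q {1..n} = (\<Sum>k\<in>{1..n}. (K - r k + pa k) / 2)"
    using Q unfolding K_def by (intro sum.cong) simp_all
  also have "\<dots> = (real n * K - sum r {1..n} + sum pa {1..n}) / 2"
    by (simp add: sum.distrib sum_subtractf sum_divide_distrib[symmetric])
  finally have sum_Q: "sum Q {1..n} = (real n * K - sum r {2..n} + sum pa {1..n}) / 2"
    unfolding sum_r .
  have identity: "(\<alpha> + \<beta>) * Q k - \<beta> * sum Q {1..n} - \<alpha> * r k
      = - ((3 * \<alpha> + \<beta>) * r k - \<beta> * sum r {2..n} - ?b k) / 2" if "k \<in> {2..n}" for k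
  proof -
    have Q_k: "Q k = (K - r k + pa k) / 2"
      using that Q unfolding K_def by simp
    show ?thesis
      unfolding Q_k sum_Q cp_system_rhs_def D0 by (simp add: field_simps)
  qed
  then have "(\<forall>k\<in>{2..n}. (\<alpha> + \<beta>) * Q k - \<beta> * sum Q {1..n} = \<alpha> * r k)
     \<longleftrightarrow> (\<forall>k\<in>{2..n}. (3 * \<alpha> + \<beta>) * r k - \<beta> * sum r {2..n} = ?b k)"
  proof (intro ball_cong refl)
    fix k assume "k \<in> {2..n}"
    from identity[OF this] show "(\<alpha> + \<beta>) * Q k - \<beta> * sum Q {1..n} = \<alpha> * r k
        \<longleftrightarrow> (3 * \<alpha> + \<beta>) * r k - \<beta> * sum r {2..n} = ?b k"
      by argo
  qed
  also have "\<dots> \<longleftrightarrow> (\<forall>k\<in>{2..n}. r k = (?b k + \<beta> * sum ?b {2..n} / (3 * \<alpha> + \<beta> - real (card {2..n}) * \<beta>)) / (3 * \<alpha> + \<beta>))"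
    using assms(1) pos by (intro shifted_linear_system_iff) (simp_all add: of_nat_diff)
  also have "\<dots> \<longleftrightarrow> (\<forall>k\<in>{2..n}. r k = ne_cp_revenue n D0 \<alpha> \<beta> pa k)"
    using assms(1) by (intro ball_cong refl) (simp add: ne_cp_revenue_def of_nat_diff)
  finally show ?thesis .
qed

lemma focs_iff_ne_revenues:
  fixes Q r pa :: "nat \<Rightarrow> real"
  assumes "n \<ge> 2" and "\<beta> \<ge> 0" and "\<alpha> > (real n - 1) * \<beta>" and "r 1 = 0"
  defines "p \<equiv> \<lambda>k. Q k + r k - pa k"
  shows "((\<forall>k\<in>{1..n}. demand n D0 \<alpha> \<beta> p k = (\<alpha> + \<beta>) * Q k - \<beta> * sum Q {1..n})
          \<and> (\<forall>k\<in>{2..n}. demand n D0 \<alpha> \<beta> p k = \<alpha> * r k))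
     \<longleftrightarrow> (\<forall>k\<in>{1..n}. Q k = ne_isp_revenue n D0 \<alpha> \<beta> pa k)
          \<and> (\<forall>k\<in>{2..n}. r k = ne_cp_revenue n D0 \<alpha> \<beta> pa k)"
proof -
  let ?Q_eq = "\<forall>k\<in>{1..n}. Q k = (ne_level n D0 \<alpha> \<beta> - r k + pa k) / 2"
  have n: "n \<ge> 1"
    using assms(1) by simp
  have "((\<forall>k\<in>{1..n}. demand n D0 \<alpha> \<beta> p k = (\<alpha> + \<beta>) * Q k - \<beta> * sum Q {1..n})
          \<and> (\<forall>k\<in>{2..n}. demand n D0 \<alpha> \<beta> p k = \<alpha> * r k))
     \<longleftrightarrow> (\<forall>k\<in>{1..n}. demand n D0 \<alpha> \<beta> p k = (\<alpha> + \<beta>) * Q k - \<beta> * sum Q {1..n})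
          \<and> (\<forall>k\<in>{2..n}. (\<alpha> + \<beta>) * Q k - \<beta> * sum Q {1..n} = \<alpha> * r k)"
    by auto
  also have "\<dots> \<longleftrightarrow> ?Q_eq \<and> (\<forall>k\<in>{2..n}. (\<alpha> + \<beta>) * Q k - \<beta> * sum Q {1..n} = \<alpha> * r k)"
    unfolding p_def using isp_foc_iff[OF n assms(2,3)] by blast
  also have "\<dots> \<longleftrightarrow> ?Q_eq \<and> (\<forall>k\<in>{2..n}. r k = ne_cp_revenue n D0 \<alpha> \<beta> pa k)"
    using cp_foc_iff[where Q = Q and r = r and pa = pa, OF assms(1-4)] by blast
  also have "\<dots> \<longleftrightarrow> (\<forall>k\<in>{1..n}. Q k = ne_isp_revenue n D0 \<alpha> \<beta> pa k)
          \<and> (\<forall>k\<in>{2..n}. r k = ne_cp_revenue n D0 \<alpha> \<beta> pa k)"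
  proof -
    have "{1..n} = insert 1 {2..n}"
      using n by auto
    then show ?thesis
      using assms(4) by (auto simp: ne_isp_revenue_def ne_cp_revenue_def)
  qed
  finally show ?thesis .
qed

lemma is_NE_iff_ne_revenues:
  assumes "n \<ge> 2" and "\<beta> \<ge> 0" and "\<alpha> > (real n - 1) * \<beta>"
  shows "is_NE n D0 \<alpha> \<beta> pa pd s pc \<longleftrightarrow>
    (\<forall>k\<in>{1..n}. isp_unit_revenue pa pd s k = ne_isp_revenue n D0 \<alpha> \<beta> pa k) \<and>
    (\<forall>k\<in>{2..n}. cp_unit_revenue pa pd pc k = ne_cp_revenue n D0 \<alpha> \<beta> pa k)"
proof -
  let ?Q = "isp_unit_revenue pa pd s" and ?r = "cp_unit_revenue pa pd pc"
  have "(real n - 1) * \<beta> \<ge> 0"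
    using assms(1,2) by simp
  then have "\<alpha> > 0"
    using assms(3) by linarith
  have isp: "(\<forall>s'. U_ISP n D0 \<alpha> \<beta> pa pd s' pc \<le> U_ISP n D0 \<alpha> \<beta> pa pd s pc) \<longleftrightarrow>
      (\<forall>k\<in>{1..n}. demand n D0 \<alpha> \<beta> (price s pc) k = (\<alpha> + \<beta>) * ?Q k - \<beta> * sum ?Q {1..n})"
    using assms(1) by (intro isp_best_response_iff assms(2,3)) simp
  have cp: "(\<forall>i\<in>{2..n}. \<forall>x. U_CP n D0 \<alpha> \<beta> pa pd s (pc(i := x)) i \<le> U_CP n D0 \<alpha> \<beta> pa pd s pc i) \<longleftrightarrow>
      (\<forall>k\<in>{2..n}. demand n D0 \<alpha> \<beta> (price s pc) k = \<alpha> * ?r k)"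
    using cp_best_response_iff[OF _ \<open>\<alpha> > 0\<close>] by blast
  have "price s pc = (\<lambda>k. ?Q k + ?r k - pa k)"
    by (rule ext) (rule price_eq_unit_revenues)
  moreover have "?r 1 = 0"
    by (simp add: cp_unit_revenue_def)
  ultimately show ?thesis
    unfolding is_NE_def isp cp using focs_iff_ne_revenues[OF assms] by simp
qed

lemma is_NE_iff_ne_strategies:
  assumes "n \<ge> 2" and "\<beta> \<ge> 0" and "\<alpha> > (real n - 1) * \<beta>"
  shows "is_NE n D0 \<alpha> \<beta> pa pd s pc \<longleftrightarrow>
    s 1 = ne_isp_revenue n D0 \<alpha> \<beta> pa 1 - pa 1 \<and>
    (\<forall>k\<in>{2..n}. s k = ne_isp_revenue n D0 \<alpha> \<beta> pa k - pd k
                \<and> pc k = ne_cp_revenue n D0 \<alpha> \<beta> pa k - pa k + pd k)"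
proof -
  have "{1..n} = insert 1 {2..n}"
    using assms(1) by auto
  then show ?thesis
    unfolding is_NE_iff_ne_revenues[OF assms]
    by (auto simp: isp_unit_revenue_def cp_unit_revenue_def)
qed

lemma demand_at_NE:
  assumes "n \<ge> 2" and "\<beta> \<ge> 0" and "\<alpha> > (real n - 1) * \<beta>"
    and "is_NE n D0 \<alpha> \<beta> pa pd s pc" and "k \<in> {1..n}"
  shows "demand n D0 \<alpha> \<beta> (price s pc) k =
    demand n D0 \<alpha> \<beta> (\<lambda>j. ne_isp_revenue n D0 \<alpha> \<beta> pa j + ne_cp_revenue n D0 \<alpha> \<beta> pa j - pa j) k"
proof (rule demand_cong[OF _ assms(5)])
  have revenues: "\<forall>k\<in>{1..n}. isp_unit_revenue pa pd s k = ne_isp_revenue n D0 \<alpha> \<beta> pa k"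
    "\<forall>k\<in>{2..n}. cp_unit_revenue pa pd pc k = ne_cp_revenue n D0 \<alpha> \<beta> pa k"
    using assms(4) is_NE_iff_ne_revenues[OF assms(1-3)] by blast+
  show "\<forall>j\<in>{1..n}. price s pc j =
      ne_isp_revenue n D0 \<alpha> \<beta> pa j + ne_cp_revenue n D0 \<alpha> \<beta> pa j - pa j"
  proof
    fix j assume j: "j \<in> {1..n}"
    have "cp_unit_revenue pa pd pc j = ne_cp_revenue n D0 \<alpha> \<beta> pa j"
      using revenues(2) j by (cases "j = 1") (auto simp: cp_unit_revenue_def ne_cp_revenue_def)
    then show "price s pc j = ne_isp_revenue n D0 \<alpha> \<beta> pa j + ne_cp_revenue n D0 \<alpha> \<beta> pa j - pa j"
      using revenues(1) j by (simp add: price_eq_unit_revenues[where pa = pa and pd = pd])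
  qed
qed

lemma ex_unique_NE:
  assumes "n \<ge> 2" and "\<beta> \<ge> 0" and "\<alpha> > (real n - 1) * \<beta>"
  shows "\<exists>s pc. is_NE n D0 \<alpha> \<beta> pa pd s pc \<and>
    (\<forall>s' pc'. is_NE n D0 \<alpha> \<beta> pa pd s' pc' \<longrightarrow>
      (\<forall>i\<in>{1..n}. s' i = s i) \<and> (\<forall>i\<in>{2..n}. pc' i = pc i))"
proof -
  let ?Q = "ne_isp_revenue n D0 \<alpha> \<beta> pa" and ?r = "ne_cp_revenue n D0 \<alpha> \<beta> pa"
  let ?s = "\<lambda>k. if k = 1 then ?Q 1 - pa 1 else ?Q k - pd k" and ?pc = "\<lambda>k. ?r k - pa k + pd k"
  have "is_NE n D0 \<alpha> \<beta> pa pd ?s ?pc"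
    by (simp add: is_NE_iff_ne_strategies[OF assms])
  moreover have "(\<forall>i\<in>{1..n}. s' i = ?s i) \<and> (\<forall>i\<in>{2..n}. pc' i = ?pc i)"
    if "is_NE n D0 \<alpha> \<beta> pa pd s' pc'" for s' pc'
    using that unfolding is_NE_iff_ne_strategies[OF assms] by (auto simp: Ball_def)
  ultimately show ?thesis
    by blast
qed

lemma NE_outcome:
  assumes "n \<ge> 2" and "\<beta> \<ge> 0" and "\<alpha> > (real n - 1) * \<beta>"
    and ne: "is_NE n D0 \<alpha> \<beta> pa pd s pc"
  defines "Q \<equiv> ne_isp_revenue n D0 \<alpha> \<beta> pa" and "r \<equiv> ne_cp_revenue n D0 \<alpha> \<beta> pa"
  defines "Dv \<equiv> demand n D0 \<alpha> \<beta> (\<lambda>j. Q j + r j - pa j)"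
  shows "s 1 = - pa 1 / 2 + D0 / (2 * (\<alpha> - (real n - 1) * \<beta>))
    \<and> (\<forall>i\<in>{2..n}. s i = Q i - pd i \<and> pc i = (r i - pa i) + pd i)
    \<and> (\<forall>i\<in>{1..n}. demand n D0 \<alpha> \<beta> (price s pc) i = Dv i)
    \<and> s 1 + pa 1 = Q 1
    \<and> (\<forall>i\<in>{2..n}. s i + pd i = Q i \<and> pc i + pa i - pd i = r i)
    \<and> U_ISP n D0 \<alpha> \<beta> pa pd s pc = (\<Sum>k\<in>{1..n}. Dv k * Q k)
    \<and> (\<forall>i\<in>{2..n}. U_CP n D0 \<alpha> \<beta> pa pd s pc i = Dv i * r i)"
proof -
  have demand: "\<forall>k\<in>{1..n}. demand n D0 \<alpha> \<beta> (price s pc) k = Dv k"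
    unfolding Dv_def Q_def r_def using demand_at_NE[OF assms(1-3) ne] by blast
  have "U_ISP n D0 \<alpha> \<beta> pa pd s pc = (\<Sum>k\<in>{1..n}. Dv k * Q k)"
    using ne demand assms(1) unfolding is_NE_iff_ne_revenues[OF assms(1-3)] Q_def
    by (simp add: U_ISP_eq_sum)
  moreover have "Q 1 - pa 1 = - pa 1 / 2 + D0 / (2 * (\<alpha> - (real n - 1) * \<beta>))"
    by (simp add: Q_def ne_isp_revenue_def ne_cp_revenue_def ne_level_def field_simps)
  ultimately show ?thesis
    using ne demand unfolding is_NE_iff_ne_strategies[OF assms(1-3)] Q_def r_def
    by (auto simp: U_CP_eq cp_unit_revenue_def)
qed

theorem theorem5:
  fixes n :: nat and D0 \<alpha> \<beta> :: real and pa :: "nat \<Rightarrow> real"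
  assumes "n \<ge> 2" and "D0 > 0" and "\<beta> \<ge> 0" and "\<alpha> > (real n - 1) * \<beta>"
    and "\<forall>i\<in>{1..n}. pa i \<ge> 0"
  shows
    "(\<forall>pd. \<exists>s pc. is_NE n D0 \<alpha> \<beta> pa pd s pc \<and>
        (\<forall>s' pc'. is_NE n D0 \<alpha> \<beta> pa pd s' pc' \<longrightarrow>
            (\<forall>i\<in>{1..n}. s' i = s i) \<and> (\<forall>i\<in>{2..n}. pc' i = pc i)))
   \<and> (\<exists>g h Dv rI rC UI UC.
        \<forall>pd s pc. is_NE n D0 \<alpha> \<beta> pa pd s pc \<longrightarrow>
          s 1 = - pa 1 / 2 + D0 / (2 * (\<alpha> - (real n - 1) * \<beta>))
          \<and> (\<forall>i\<in>{2..n}. s i = g i - pd i \<and> pc i = h i + pd i)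
          \<and> (\<forall>i\<in>{1..n}. demand n D0 \<alpha> \<beta> (price s pc) i = Dv i)
          \<and> s 1 + pa 1 = rI 1
          \<and> (\<forall>i\<in>{2..n}. s i + pd i = rI i \<and> pc i + pa i - pd i = rC i)
          \<and> U_ISP n D0 \<alpha> \<beta> pa pd s pc = UI
          \<and> (\<forall>i\<in>{2..n}. U_CP n D0 \<alpha> \<beta> pa pd s pc i = UC i))"
  (* The witnesses g, h, Dv, ... are read off NE_outcome
     by unification. *)
  by (rule conjI, intro allI ex_unique_NE[OF assms(1,3,4)],
      intro exI allI impI, rule NE_outcome[OF assms(1,3,4)])

end
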